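(* Suppose $n \ge 2k + 1 \ge 5$. Let $Q$ be an independent set of vertices in $K(n,k)$. Suppose $x_1x_2$ is an edge of $K(n,k)$ such that $x_1\in Q$. If $N(\{x_1,x_2\})$ and $Q$ are disjoint, then $|Q| \le \binom{n-1}{k-1}-\binom{n-k-1}{k-1}+1$.
   Context: The Kneser graph $K(n,k)$ has as vertices the $k$-element subsets of $[n]=\{1,\dots,n\}$, two vertices being adjacent iff they are disjoint. For a set $X$ of vertices of a graph, the neighborhood $N(X)$ is the set of vertices not in $X$ that are adjacent to at least one vertex of $X$. *)

theory Defs
  imports Main
begin

definition kneser_vertices :: "nat \<Rightarrow> nat \<Rightarrow> nat set set" where
  "kneser_vertices n k = {A. A \<subseteq> {1..n} \<and> card A = k}"

definition kneser_adj :: "nat \<Rightarrow> nat \<Rightarrow> nat set \<Rightarrow> nat set \<Rightarrow> bool" where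
  "kneser_adj n k A B \<longleftrightarrow> A \<in> kneser_vertices n k \<and> B \<in> kneser_vertices n k \<and> A \<inter> B = {}"

definition kneser_independent :: "nat \<Rightarrow> nat \<Rightarrow> nat set set \<Rightarrow> bool" where
  "kneser_independent n k Q \<longleftrightarrow> Q \<subseteq> kneser_vertices n k \<and>
     (\<forall>A\<in>Q. \<forall>B\<in>Q. \<not> kneser_adj n k A B)"

definition kneser_nbhd :: "nat \<Rightarrow> nat \<Rightarrow> nat set set \<Rightarrow> nat set set" where
  "kneser_nbhd n k X = {B \<in> kneser_vertices n k. B \<notin> X \<and> (\<exists>A\<in>X. kneser_adj n k A B)}"

end

(* Deleting x1 from Q leaves an intersecting family of k-subsets of [n] all of whose members
   meet both of the disjoint k-sets x1 and x2, so it suffices to bound such families. For an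
   intersecting family F of t-subsets of X whose members all meet two disjoint sets A and B,
   with |B| <= |A| and t <= |A|, one shows
     |F| <= C(|X| - 1, t - 1) - C(|X| - 1 - |A|, t - 1)
   by induction on X, using shifts (compressions), which preserve all the hypotheses.
   If some point c of X lies outside A and B, shift F towards c: the members avoiding c and the
   link of c are then smaller instances, and Pascal's rule adds up their bounds.
   If X is the union of A and B, shift within A towards a point a. Either some member S0 meets
   A only in a; then every member meets the (t - 1)-subset S0 - {a} of B, and replacing B by it
   leaves a point uncovered. Or every member meets A - {a}, and a is left uncovered.
   When |X| = 2t, pairing sets with their complements gives the bound, and when the subtracted
   binomial vanishes it is the Erdos-Ko-Rado theorem. *)

theory Submission
  imports Defs
begin

section \<open>Intersecting families of k-subsets\<close>

definition intersecting :: "'a set set \<Rightarrow> bool" where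
  "intersecting F \<longleftrightarrow> (\<forall>S\<in>F. \<forall>T\<in>F. S \<inter> T \<noteq> {})"

definition k_subsets :: "'a set \<Rightarrow> nat \<Rightarrow> 'a set set" where
  "k_subsets X k = {S. S \<subseteq> X \<and> card S = k}"

lemma intersecting_subset: "intersecting F \<Longrightarrow> G \<subseteq> F \<Longrightarrow> intersecting G"
  unfolding intersecting_def by blast

lemma finite_k_subsets: "finite X \<Longrightarrow> finite (k_subsets X k)"
  unfolding k_subsets_def by (rule finite_subset[of _ "Pow X"]) auto

lemma card_k_subsets: "finite X \<Longrightarrow> card (k_subsets X k) = card X choose k"
  unfolding k_subsets_def by (simp add: n_subsets)

lemma k_subsetsD:
  assumes "finite X" "S \<in> k_subsets X k"
  shows "finite S" "S \<subseteq> X" "card S = k"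
  using assms finite_subset unfolding k_subsets_def by auto

lemma insert_Diff_in_k_subsets:
  assumes "finite X" "S \<in> k_subsets X k" "x \<in> S" "y \<in> X" "y \<notin> S"
  shows "insert y (S - {x}) \<in> k_subsets X k"
proof -
  have S: "finite S" "S \<subseteq> X" "card S = k" using k_subsetsD[OF assms(1,2)] .
  then have "card S > 0" using assms(3) card_gt_0_iff by blast
  then show ?thesis using S assms(3-5) unfolding k_subsets_def by (auto simp: card_Diff_singleton)
qed

section \<open>Shifting\<close>

definition shift_set :: "'a \<Rightarrow> 'a \<Rightarrow> 'a set set \<Rightarrow> 'a set \<Rightarrow> 'a set" where
  "shift_set x y F S =
     (if x \<in> S \<and> y \<notin> S \<and> insert y (S - {x}) \<notin> F then insert y (S - {x}) else S)"

definition shift :: "'a \<Rightarrow> 'a \<Rightarrow> 'a set set \<Rightarrow> 'a set set" where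
  "shift x y F = shift_set x y F ` F"

definition shift_stable :: "'a \<Rightarrow> 'a set \<Rightarrow> 'a set set \<Rightarrow> bool" where
  "shift_stable x Y F \<longleftrightarrow> (\<forall>S\<in>F. \<forall>y\<in>Y. x \<in> S \<longrightarrow> y \<notin> S \<longrightarrow> insert y (S - {x}) \<in> F)"

lemma insert_Diff_inj:
  "x \<in> S \<Longrightarrow> y \<notin> S \<Longrightarrow> x \<in> T \<Longrightarrow> y \<notin> T \<Longrightarrow> insert y (S - {x}) = insert y (T - {x}) \<Longrightarrow> S = T"
  by (metis Diff_insert_absorb Diff_iff insert_Diff)

lemma inj_on_shift_set:
  assumes "x \<noteq> y"
  shows "inj_on (shift_set x y F) F"
proof (rule inj_onI)
  fix S T assume "S \<in> F" "T \<in> F" "shift_set x y F S = shift_set x y F T"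
  then show "S = T"
    unfolding shift_set_def using insert_Diff_inj[of x S y T] by (auto split: if_splits)
qed

lemma card_shift: "x \<noteq> y \<Longrightarrow> card (shift x y F) = card F"
  unfolding shift_def by (intro card_image inj_on_shift_set)

lemma finite_shift: "finite F \<Longrightarrow> finite (shift x y F)"
  unfolding shift_def by simp

lemma shift_preserves:
  assumes "\<forall>S\<in>F. P S" and "\<And>S. P S \<Longrightarrow> x \<in> S \<Longrightarrow> y \<notin> S \<Longrightarrow> P (insert y (S - {x}))"
  shows "\<forall>S\<in>shift x y F. P S"
  using assms unfolding shift_def shift_set_def by auto

lemma shift_set_meets_unshifted:
  assumes "intersecting F" "S \<in> F" "T \<in> F" "shift_set x y F T = T"
  shows "shift_set x y F S \<inter> T \<noteq> {}"
proof (cases "shift_set x y F S = S")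
  case True
  then show ?thesis using assms(1-3) unfolding intersecting_def by simp
next
  case shifted: False
  then have S: "x \<in> S" "y \<notin> S" "shift_set x y F S = insert y (S - {x})"
    unfolding shift_set_def by (auto split: if_splits)
  show ?thesis
  proof (cases "x \<in> T \<and> y \<notin> T")
    case True
    \<comment> \<open>T was left in place, so its own shift is already a member of F and meets S\<close>
    then have "insert y (T - {x}) \<in> F"
      using assms(4) unfolding shift_set_def by (auto split: if_splits)
    then have "S \<inter> insert y (T - {x}) \<noteq> {}" using assms(1,2) unfolding intersecting_def by blast
    then show ?thesis using S True by blast
  next
    case False
    then show ?thesis using assms(1-3) S unfolding intersecting_def by blast
  qed
qed

lemma intersecting_shift:
  assumes "intersecting F"
  shows "intersecting (shift x y F)"
proof -
  have "shift_set x y F S \<inter> shift_set x y F T \<noteq> {}" if "S \<in> F" "T \<in> F" for S T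
  proof (cases "shift_set x y F T = T")
    case True
    then show ?thesis using shift_set_meets_unshifted[OF assms that] by simp
  next
    case T: False
    show ?thesis
    proof (cases "shift_set x y F S = S")
      case True
      then show ?thesis using shift_set_meets_unshifted[OF assms that(2,1)] by blast
    next
      case False
      then show ?thesis using T unfolding shift_set_def by (auto split: if_splits)
    qed
  qed
  then show ?thesis unfolding intersecting_def shift_def by blast
qed

lemma card_shift_containing_less:
  assumes "finite F" "x \<noteq> y" "S \<in> F" "x \<in> S" "y \<notin> S" "insert y (S - {x}) \<notin> F"
  shows "card {T \<in> shift x y F. x \<in> T} < card {T \<in> F. x \<in> T}"
proof (rule psubset_card_mono)
  show "finite {T \<in> F. x \<in> T}" using assms(1) by simp
  have "{T \<in> shift x y F. x \<in> T} \<subseteq> {T \<in> F. x \<in> T} - {S}"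
    using assms(2-6) unfolding shift_def shift_set_def by (auto split: if_splits)
  then show "{T \<in> shift x y F. x \<in> T} \<subset> {T \<in> F. x \<in> T}"
    using assms(3,4) by blast
qed

lemma exists_shift_stable:
  assumes "finite F" "intersecting F" "\<forall>S\<in>F. P S" "x \<notin> Y"
    and closed: "\<And>S y. P S \<Longrightarrow> x \<in> S \<Longrightarrow> y \<in> Y \<Longrightarrow> y \<notin> S \<Longrightarrow> P (insert y (S - {x}))"
  obtains G where "finite G" "card G = card F" "intersecting G" "\<forall>S\<in>G. P S" "shift_stable x Y G"
  using assms(1-3)
proof (induction "card {S \<in> F. x \<in> S}" arbitrary: F rule: less_induct)
  case less
  show ?case
  proof (cases "shift_stable x Y F")
    case True
    then show ?thesis using less.prems by blast
  next
    case False
    then obtain S y where S: "S \<in> F" "y \<in> Y" "x \<in> S" "y \<notin> S" "insert y (S - {x}) \<notin> F"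
      unfolding shift_stable_def by blast
    have "x \<noteq> y" using S(2) assms(4) by blast
    show ?thesis
    proof (rule less.hyps)
      show "card {T \<in> shift x y F. x \<in> T} < card {T \<in> F. x \<in> T}"
        using card_shift_containing_less[OF less.prems(2) \<open>x \<noteq> y\<close> S(1,3-5)] .
      show "\<forall>T\<in>shift x y F. P T"
        using shift_preserves[OF less.prems(4)] closed S(2) by blast
      show "\<And>G. finite G \<Longrightarrow> card G = card (shift x y F) \<Longrightarrow> intersecting G \<Longrightarrow>
          \<forall>S\<in>G. P S \<Longrightarrow> shift_stable x Y G \<Longrightarrow> thesis"
        using less.prems(1) card_shift[OF \<open>x \<noteq> y\<close>] by metis
    qed (use less.prems(2,3) in \<open>simp_all add: finite_shift intersecting_shift\<close>)
  qed
qed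

section \<open>The Erdos-Ko-Rado theorem\<close>

definition link :: "'a \<Rightarrow> 'a set set \<Rightarrow> 'a set set" where
  "link c F = (\<lambda>S. S - {c}) ` {S \<in> F. c \<in> S}"

lemma card_eq_card_avoiding_plus_card_link:
  assumes "finite F"
  shows "card F = card {S \<in> F. c \<notin> S} + card (link c F)"
proof -
  have "inj_on (\<lambda>S. S - {c}) {S \<in> F. c \<in> S}"
    by (rule inj_onI) (metis (no_types, lifting) insert_Diff mem_Collect_eq)
  then have "card (link c F) = card {S \<in> F. c \<in> S}" unfolding link_def by (rule card_image)
  moreover have "card ({S \<in> F. c \<notin> S} \<union> {S \<in> F. c \<in> S}) = card {S \<in> F. c \<notin> S} + card {S \<in> F. c \<in> S}"
    using assms by (intro card_Un_disjoint) auto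
  moreover have "{S \<in> F. c \<notin> S} \<union> {S \<in> F. c \<in> S} = F" by blast
  ultimately show ?thesis by simp
qed

lemma intersecting_link:
  assumes X: "finite X" "2 * t \<le> card X"
    and F: "F \<subseteq> k_subsets X t" "intersecting F" "shift_stable c (X - {c}) F"
  shows "intersecting (link c F)"
  unfolding intersecting_def link_def
proof (clarify)
  fix S T assume S: "S \<in> F" "c \<in> S" and T: "T \<in> F" "c \<in> T"
    and disj: "(S - {c}) \<inter> (T - {c}) = {}"
  have fin: "finite S" "finite T" and card: "card S = t" "card T = t"
    using S(1) T(1) F(1) k_subsetsD[OF X(1)] by blast+
  have "S \<inter> T = {c}" using S(2) T(2) disj by blast
  then have "card (S \<union> T) < card X"
    using card_Un_Int[OF fin] card X(2) by simp
  then obtain y where y: "y \<in> X" "y \<notin> S \<union> T"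
    using card_mono[of "S \<union> T" X] fin by auto
  \<comment> \<open>swapping c for an element outside S and T produces a member of F disjoint from T\<close>
  then have "insert y (S - {c}) \<in> F"
    using F(3) S unfolding shift_stable_def by blast
  moreover have "insert y (S - {c}) \<inter> T = {}" using disj y T(2) by blast
  ultimately show False using F(2) T(1) unfolding intersecting_def by blast
qed

lemma intersecting_split:
  assumes X: "finite X" "c \<in> X" "2 * t \<le> card X"
    and F: "F \<subseteq> k_subsets X t" "intersecting F" "\<forall>S\<in>F. P S"
    and closed: "\<And>S y. P S \<Longrightarrow> c \<in> S \<Longrightarrow> y \<in> X \<Longrightarrow> y \<notin> S \<Longrightarrow> P (insert y (S - {c}))"
  obtains F0 F1 where "card F = card F0 + card F1"
    and "F0 \<subseteq> k_subsets (X - {c}) t" "intersecting F0" "\<forall>S\<in>F0. P S"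
    and "F1 \<subseteq> k_subsets (X - {c}) (t - 1)" "intersecting F1" "\<forall>S\<in>F1. P (insert c S)"
proof -
  have "finite F" using F(1) finite_k_subsets[OF X(1)] finite_subset by blast
  have closed': "insert y (S - {c}) \<in> k_subsets X t \<and> P (insert y (S - {c}))"
    if "S \<in> k_subsets X t \<and> P S" "c \<in> S" "y \<in> X - {c}" "y \<notin> S" for S y
    using that insert_Diff_in_k_subsets[OF X(1), of S t c y] closed[of S y] by simp
  have P0: "\<forall>S\<in>F. S \<in> k_subsets X t \<and> P S" using F(1,3) by blast
  have "c \<notin> X - {c}" by simp
  obtain G where G: "finite G" "card G = card F" "intersecting G"
    "\<forall>S\<in>G. S \<in> k_subsets X t \<and> P S" "shift_stable c (X - {c}) G"
    by (rule exists_shift_stable[OF \<open>finite F\<close> F(2) P0 \<open>c \<notin> X - {c}\<close> closed'])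
  have "G \<subseteq> k_subsets X t" using G(4) by blast
  show thesis
  proof (rule that)
    show "card F = card {S \<in> G. c \<notin> S} + card (link c G)"
      using card_eq_card_avoiding_plus_card_link[OF \<open>finite G\<close>] G(2) by simp
    show "intersecting (link c G)"
      using intersecting_link[OF X(1,3) \<open>G \<subseteq> k_subsets X t\<close> G(3,5)] .
    show "intersecting {S \<in> G. c \<notin> S}" by (rule intersecting_subset[OF G(3)]) blast
    show "{S \<in> G. c \<notin> S} \<subseteq> k_subsets (X - {c}) t"
      using G(4) unfolding k_subsets_def by auto
    show "link c G \<subseteq> k_subsets (X - {c}) (t - 1)"
      using G(4) unfolding k_subsets_def link_def by (auto simp: card_Diff_singleton)
    show "\<forall>S\<in>{S \<in> G. c \<notin> S}. P S" using G(4) by blast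
    show "\<forall>S\<in>link c G. P (insert c S)"
      using G(4) unfolding link_def by (simp add: insert_absorb)
  qed
qed

lemma intersecting_complement_bound:
  assumes X: "finite X" "card X = 2 * t"
    and F: "F \<subseteq> k_subsets X t" "intersecting F"
    and E: "E \<subseteq> k_subsets X t" "\<forall>S\<in>E. S \<notin> F \<and> X - S \<notin> F"
  shows "2 * card F + card E \<le> (2 * t) choose t"
proof -
  let ?G = "(\<lambda>S. X - S) ` F"
  have finite: "finite (k_subsets X t)" using finite_k_subsets[OF X(1)] .
  have "inj_on (\<lambda>S. X - S) F"
    using F(1) unfolding k_subsets_def by (intro inj_onI) (metis double_diff mem_Collect_eq order_refl subsetD)
  then have "card ?G = card F" by (rule card_image)
  have "?G \<subseteq> k_subsets X t"
    using F(1) X unfolding k_subsets_def by (auto simp: card_Diff_subset finite_subset)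
  moreover have "F \<inter> ?G = {}" using F(2) unfolding intersecting_def by blast
  moreover have "E \<inter> (F \<union> ?G) = {}"
  proof -
    have "X - (X - S) = S" if "S \<in> F" for S using that F(1) unfolding k_subsets_def by blast
    then show ?thesis using E(2) by fastforce
  qed
  ultimately have "card E + (card F + card ?G) \<le> card (k_subsets X t)"
    using F(1) E(1) finite card_mono[OF finite, of "E \<union> (F \<union> ?G)"]
    by (simp add: card_Un_disjoint finite_subset)
  then show ?thesis using \<open>card ?G = card F\<close> card_k_subsets[OF X(1)] X(2) by simp
qed

lemma central_binomial_eq_twice: "1 \<le> t \<Longrightarrow> (2 * t) choose t = 2 * ((2 * t - 1) choose (t - 1))"
  using choose_reduce_nat[of "2 * t" t] binomial_symmetric[of t "2 * t - 1"] by simp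

lemma card_intersecting_singletons:
  assumes "F \<subseteq> k_subsets X 1" "intersecting F"
  shows "card F \<le> 1"
proof -
  have "S = T" if "S \<in> F" "T \<in> F" for S T
  proof -
    have "card S = 1" "card T = 1" using that assms(1) unfolding k_subsets_def by auto
    then obtain u v where "S = {u}" "T = {v}" by (metis One_nat_def card_1_singleton_iff)
    moreover have "S \<inter> T \<noteq> {}" using assms(2) that unfolding intersecting_def by blast
    ultimately show ?thesis by auto
  qed
  then show ?thesis by (cases "finite F") (auto simp: card_le_Suc0_iff_eq)
qed

theorem erdos_ko_rado:
  assumes "finite X" "1 \<le> t" "2 * t \<le> card X" "F \<subseteq> k_subsets X t" "intersecting F"
  shows "card F \<le> (card X - 1) choose (t - 1)"
  using assms
proof (induction X arbitrary: t F rule: finite_psubset_induct)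
  case (psubset X)
  consider "t = 1" | "card X = 2 * t" | "2 \<le> t" "2 * t < card X"
    using psubset.prems(1,2) by linarith
  then show ?case
  proof cases
    case 1
    then show ?thesis using card_intersecting_singletons psubset.prems(3,4) by simp
  next
    case 2
    have "2 * card F + card ({} :: 'a set set) \<le> (2 * t) choose t"
      by (rule intersecting_complement_bound) (use 2 psubset in auto)
    then show ?thesis using central_binomial_eq_twice[OF psubset.prems(1)] 2 by simp
  next
    case 3
    then obtain c where c: "c \<in> X" by fastforce
    obtain F0 F1 where card: "card F = card F0 + card F1"
      and F0: "F0 \<subseteq> k_subsets (X - {c}) t" "intersecting F0"
      and F1: "F1 \<subseteq> k_subsets (X - {c}) (t - 1)" "intersecting F1"
      by (rule intersecting_split[OF psubset.hyps c psubset.prems(2-4), where P = "\<lambda>_. True"]) auto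
    have X': "X - {c} \<subset> X" "card (X - {c}) = card X - 1" using c by (auto simp: psubset.hyps)
    have "card F0 \<le> (card X - 1 - 1) choose (t - 1)"
      using psubset.IH[OF X'(1) _ _ F0] X'(2) 3 by simp
    moreover have "card F1 \<le> (card X - 1 - 1) choose (t - 1 - 1)"
      using psubset.IH[OF X'(1) _ _ F1] X'(2) 3 by simp
    ultimately show ?thesis
      using card choose_reduce_nat[of "card X - 1" "t - 1"] 3 by simp
  qed
qed

section \<open>Intersecting families meeting two disjoint sets\<close>

lemma shift_stable_pivot:
  assumes F: "intersecting F" "shift_stable a (A - {a}) F" "S0 \<in> F" "S0 \<inter> A = {a}"
    and G: "G \<in> F" "finite G" "card G \<le> card A" "\<not> G \<subseteq> A"
  shows "G \<inter> (S0 - {a}) \<noteq> {}"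
proof
  assume disj: "G \<inter> (S0 - {a}) = {}"
  \<comment> \<open>G must meet every set obtained from S0 by moving a inside A, so G contains A\<close>
  have "a \<in> S0" using F(4) by blast
  have "A \<subseteq> G"
  proof
    fix y assume "y \<in> A"
    have "insert y (S0 - {a}) \<in> F"
    proof (cases "y = a")
      case True
      then show ?thesis using F(3) \<open>a \<in> S0\<close> by (simp add: insert_absorb)
    next
      case False
      then show ?thesis using F(2-4) \<open>y \<in> A\<close> unfolding shift_stable_def by blast
    qed
    then have "G \<inter> insert y (S0 - {a}) \<noteq> {}" using F(1) G(1) unfolding intersecting_def by blast
    then show "y \<in> G" using disj by blast
  qed
  then have "A = G" using card_subset_eq[OF G(2)] card_mono[OF G(2)] G(3) by (simp add: le_antisym)
  then show False using G(4) by blast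
qed

locale pair_meeting_family =
  fixes X :: "'a set" and t :: nat and A B :: "'a set" and F :: "'a set set"
  assumes finite_X: "finite X"
    and A_subset: "A \<subseteq> X" and B_subset: "B \<subseteq> X" and disjoint: "A \<inter> B = {}"
    and B_nonempty: "B \<noteq> {}" and card_B_le: "card B \<le> card A" and t_le_card_A: "t \<le> card A"
    and two_t_le_card_X: "2 * t \<le> card X"
    and F_subset: "F \<subseteq> k_subsets X t" and F_intersecting: "intersecting F"
    and meets_A: "S \<in> F \<Longrightarrow> S \<inter> A \<noteq> {}"
    and meets_B: "S \<in> F \<Longrightarrow> S \<inter> B \<noteq> {}"
begin

lemma card_A_Un_B: "card (A \<union> B) = card A + card B"
  using A_subset B_subset finite_X disjoint by (intro card_Un_disjoint) (auto simp: finite_subset)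

lemma two_le_t:
  assumes "S \<in> F"
  shows "2 \<le> t"
proof -
  obtain a b where "a \<in> S \<inter> A" "b \<in> S \<inter> B" using meets_A meets_B assms by blast
  moreover have "finite S" "card S = t" using F_subset assms k_subsetsD[OF finite_X] by blast+
  moreover have "a \<noteq> b" using calculation(1,2) disjoint by blast
  ultimately show ?thesis
    using card_mono[of S "{a, b}"] by simp
qed

lemma bound_if_empty:
  assumes "F = {}"
  shows "card F + ((card X - 1 - card A) choose (t - 1)) \<le> (card X - 1) choose (t - 1)"
  using assms binomial_right_mono[of "card X - 1 - card A" "card X - 1"] by simp

lemma bound_if_vanishing:
  assumes "2 \<le> t" "card X - 1 - card A < t - 1"
  shows "card F + ((card X - 1 - card A) choose (t - 1)) \<le> (card X - 1) choose (t - 1)"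
  using erdos_ko_rado[OF finite_X _ two_t_le_card_X F_subset F_intersecting] assms
  by (simp add: binomial_eq_0)

lemma bound_if_half:
  assumes "2 \<le> t" "card X = 2 * t"
  shows "card F + ((card X - 1 - card A) choose (t - 1)) \<le> (card X - 1) choose (t - 1)"
proof (cases "card A = t")
  case True
  have "A \<in> k_subsets X t" "X - A \<in> k_subsets X t"
    using A_subset assms True finite_X unfolding k_subsets_def
    by (auto simp: card_Diff_subset finite_subset)
  moreover have "A \<noteq> X - A"
  proof
    assume "A = X - A"
    then have "A = {}" by blast
    then show False using assms(1) True by simp
  qed
  \<comment> \<open>A misses B, and X - A misses A\<close>
  moreover have "\<forall>S\<in>{A, X - A}. S \<notin> F \<and> X - S \<notin> F"
    using meets_A meets_B disjoint A_subset by (auto simp: double_diff)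
  ultimately have "2 * card F + 2 \<le> (2 * t) choose t"
    using intersecting_complement_bound[OF finite_X assms(2) F_subset F_intersecting, of "{A, X - A}"]
    by simp
  then show ?thesis using central_binomial_eq_twice[of t] assms True by simp
next
  case False
  then show ?thesis using assms t_le_card_A by (intro bound_if_vanishing) auto
qed

lemma bound_if_not_covering:
  assumes "\<not> X \<subseteq> A \<union> B" and t: "2 \<le> t" "2 * t < card X"
    and IH: "\<And>X' t' A' B' F'. X' \<subset> X \<Longrightarrow> pair_meeting_family X' t' A' B' F' \<Longrightarrow>
      card F' + ((card X' - 1 - card A') choose (t' - 1)) \<le> (card X' - 1) choose (t' - 1)"
  shows "card F + ((card X - 1 - card A) choose (t - 1)) \<le> (card X - 1) choose (t - 1)"
proof -
  obtain c where c: "c \<in> X" "c \<notin> A \<union> B" using assms(1) by blast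
  obtain F0 F1 where card: "card F = card F0 + card F1"
    and F0: "F0 \<subseteq> k_subsets (X - {c}) t" "intersecting F0" "\<forall>S\<in>F0. S \<inter> A \<noteq> {} \<and> S \<inter> B \<noteq> {}"
    and F1: "F1 \<subseteq> k_subsets (X - {c}) (t - 1)" "intersecting F1"
      "\<forall>S\<in>F1. insert c S \<inter> A \<noteq> {} \<and> insert c S \<inter> B \<noteq> {}"
    by (rule intersecting_split[where P = "\<lambda>S. S \<inter> A \<noteq> {} \<and> S \<inter> B \<noteq> {}",
          OF finite_X c(1) two_t_le_card_X F_subset F_intersecting]) (use meets_A meets_B c(2) in auto)
  have X': "X - {c} \<subset> X" "card (X - {c}) = card X - 1" using c(1) by auto
  have "pair_meeting_family (X - {c}) t A B F0"
    by unfold_locales (use finite_X A_subset B_subset disjoint B_nonempty card_B_le t_le_card_A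
        c t X'(2) F0 in auto)
  from IH[OF X'(1) this]
  have "card F0 + ((card X - 1 - 1 - card A) choose (t - 1)) \<le> (card X - 1 - 1) choose (t - 1)"
    using X'(2) by simp
  moreover have "pair_meeting_family (X - {c}) (t - 1) A B F1"
    by unfold_locales (use finite_X A_subset B_subset disjoint B_nonempty card_B_le t_le_card_A
        c t X'(2) F1 in auto)
  from IH[OF X'(1) this]
  have "card F1 + ((card X - 1 - 1 - card A) choose (t - 1 - 1)) \<le> (card X - 1 - 1) choose (t - 1 - 1)"
    using X'(2) by simp
  moreover have "card A + 2 \<le> card X"
  proof -
    have "card (insert c (A \<union> B)) \<le> card X"
      using c A_subset B_subset finite_X by (intro card_mono) auto
    then have "Suc (card A + card B) \<le> card X"
      using card_A_Un_B c A_subset B_subset finite_X by (simp add: finite_subset)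
    moreover have "card B > 0" using B_nonempty B_subset finite_X by (simp add: finite_subset card_gt_0_iff)
    ultimately show ?thesis by linarith
  qed
  ultimately show ?thesis
    using card choose_reduce_nat[of "card X - 1" "t - 1"] choose_reduce_nat[of "card X - 1 - card A" "t - 1"] t
    by simp
qed

lemma bound_if_pivot:
  assumes cover: "X = A \<union> B" and t: "2 \<le> t" "t \<le> card B"
    and stable: "shift_stable a (A - {a}) F" and S0: "S0 \<in> F" "S0 \<inter> A = {a}"
    and free: "\<And>A' B' F'. pair_meeting_family X t A' B' F' \<Longrightarrow> \<not> X \<subseteq> A' \<union> B' \<Longrightarrow>
      card F' + ((card X - 1 - card A') choose (t - 1)) \<le> (card X - 1) choose (t - 1)"
  shows "card F + ((card X - 1 - card A) choose (t - 1)) \<le> (card X - 1) choose (t - 1)"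
proof (rule free)
  have F_card: "finite S" "card S = t" if "S \<in> F" for S
    using that F_subset k_subsetsD[OF finite_X] by blast+
  have "S0 \<subseteq> X" using S0(1) F_subset k_subsetsD[OF finite_X] by blast
  then have "S0 - {a} \<subseteq> B" using S0(2) cover by blast
  have "a \<in> S0" using S0(2) by blast
  then have "card (S0 - {a}) = t - 1" using F_card(2)[OF S0(1)] by (simp add: card_Diff_singleton)
  then have "S0 - {a} \<noteq> {}" using t(1) by (intro notI) simp
  show "pair_meeting_family X t A (S0 - {a}) F"
  proof unfold_locales
    fix S assume "S \<in> F"
    show "S \<inter> (S0 - {a}) \<noteq> {}"
    proof (rule shift_stable_pivot[OF F_intersecting stable S0 \<open>S \<in> F\<close> F_card(1)[OF \<open>S \<in> F\<close>]])
      show "card S \<le> card A" using \<open>S \<in> F\<close> F_card(2) t_le_card_A by simp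
      show "\<not> S \<subseteq> A" using meets_B[OF \<open>S \<in> F\<close>] disjoint by blast
    qed
  qed (use finite_X A_subset \<open>S0 - {a} \<subseteq> B\<close> B_subset disjoint \<open>card (S0 - {a}) = t - 1\<close>
      \<open>S0 - {a} \<noteq> {}\<close> t t_le_card_A two_t_le_card_X F_subset F_intersecting meets_A in auto)
  show "\<not> X \<subseteq> A \<union> (S0 - {a})"
  proof
    assume "X \<subseteq> A \<union> (S0 - {a})"
    then have "B \<subseteq> S0 - {a}" using B_subset disjoint by blast
    then have "card B \<le> t - 1"
      using card_mono[of "S0 - {a}" B] S0(1) F_card(1) \<open>card (S0 - {a}) = t - 1\<close> by simp
    then show False using t by simp
  qed
qed

lemma bound_if_stable_covering:
  assumes cover: "X = A \<union> B" and t: "2 \<le> t" "t < card A" "t \<le> card B"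
    and a: "a \<in> A" and stable: "shift_stable a (A - {a}) F"
    and free: "\<And>A' B' F'. pair_meeting_family X t A' B' F' \<Longrightarrow> \<not> X \<subseteq> A' \<union> B' \<Longrightarrow>
      card F' + ((card X - 1 - card A') choose (t - 1)) \<le> (card X - 1) choose (t - 1)"
  shows "card F + ((card X - 1 - card A) choose (t - 1)) \<le> (card X - 1) choose (t - 1)"
proof (cases "\<exists>S0\<in>F. S0 \<inter> A = {a}")
  case True
  then obtain S0 where "S0 \<in> F" "S0 \<inter> A = {a}" by blast
  from cover t(1,3) stable this free show ?thesis by (rule bound_if_pivot)
next
  case False
  then have meets_A': "S \<inter> (A - {a}) \<noteq> {}" if "S \<in> F" for S
    using meets_A[OF that] that by blast
  have card_A': "card (A - {a}) = card A - 1" using a by (simp add: card_Diff_singleton)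
  have "A - {a} \<noteq> {}" using card_A' t by (intro notI) simp
  have uncovered: "\<not> X \<subseteq> (A - {a}) \<union> B" using a A_subset disjoint by blast
  have smaller: "card F + ((card X - 1 - card A) choose (t - 1)) \<le> (card X - 1) choose (t - 1)"
    if "pair_meeting_family X t A' B' F" "\<not> X \<subseteq> A' \<union> B'" "card A' \<le> card A" for A' B'
    using free[OF that(1,2)] binomial_right_mono[of "card X - 1 - card A" "card X - 1 - card A'" "t - 1"]
      that(3) by linarith
  show ?thesis
  proof (cases "card B < card A")
    case True
    have "pair_meeting_family X t (A - {a}) B F"
      by unfold_locales (use finite_X A_subset B_subset disjoint B_nonempty card_A' True t
          two_t_le_card_X F_subset F_intersecting meets_A' meets_B in auto)
    from smaller[OF this uncovered] show ?thesis using card_A' by simp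
  next
    case False
    have "pair_meeting_family X t B (A - {a}) F"
      by unfold_locales (use finite_X A_subset B_subset disjoint card_A' False t
          \<open>A - {a} \<noteq> {}\<close> two_t_le_card_X F_subset F_intersecting meets_A' meets_B in auto)
    from smaller[OF this] show ?thesis using uncovered card_B_le by blast
  qed
qed

lemma bound_if_covering:
  assumes cover: "X = A \<union> B" and t: "2 \<le> t" "2 * t < card X"
    and free: "\<And>A' B' F'. pair_meeting_family X t A' B' F' \<Longrightarrow> \<not> X \<subseteq> A' \<union> B' \<Longrightarrow>
      card F' + ((card X - 1 - card A') choose (t - 1)) \<le> (card X - 1) choose (t - 1)"
  shows "card F + ((card X - 1 - card A) choose (t - 1)) \<le> (card X - 1) choose (t - 1)"
proof (cases "t \<le> card B")
  case True
  have "t < card A" using t card_A_Un_B cover card_B_le by simp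
  then obtain a where a: "a \<in> A" by fastforce
  have finite_F: "finite F" using F_subset finite_k_subsets[OF finite_X] finite_subset by blast
  let ?P = "\<lambda>S. S \<in> k_subsets X t \<and> S \<inter> A \<noteq> {} \<and> S \<inter> B \<noteq> {}"
  have P: "\<forall>S\<in>F. ?P S" using F_subset meets_A meets_B by blast
  have closed: "?P (insert y (S - {a}))" if "?P S" "a \<in> S" "y \<in> A - {a}" "y \<notin> S" for S y
    using that insert_Diff_in_k_subsets[OF finite_X, of S t a y] A_subset a disjoint by blast
  have "a \<notin> A - {a}" by simp
  obtain G where G: "finite G" "card G = card F" "intersecting G" "\<forall>S\<in>G. ?P S"
    "shift_stable a (A - {a}) G"
    by (rule exists_shift_stable[OF finite_F F_intersecting P \<open>a \<notin> A - {a}\<close> closed])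
  have "pair_meeting_family X t A B G"
    by unfold_locales (use finite_X A_subset B_subset disjoint B_nonempty card_B_le t_le_card_A
        two_t_le_card_X G(3,4) in auto)
  from pair_meeting_family.bound_if_stable_covering[OF this cover t(1) \<open>t < card A\<close> True a G(5) free]
  show ?thesis using G(2) by simp
next
  case False
  then show ?thesis using t cover card_A_Un_B by (intro bound_if_vanishing) auto
qed

end

theorem pair_meeting_family_bound:
  assumes "pair_meeting_family X t A B F"
  shows "card F + ((card X - 1 - card A) choose (t - 1)) \<le> (card X - 1) choose (t - 1)"
  using pair_meeting_family.finite_X[OF assms] assms
proof (induction X arbitrary: t A B F rule: finite_psubset_induct)
  case (psubset X)
  interpret pair_meeting_family X t A B F by (rule psubset.prems)
  have IH: "card F' + ((card X' - 1 - card A') choose (t' - 1)) \<le> (card X' - 1) choose (t' - 1)"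
    if "X' \<subset> X" "pair_meeting_family X' t' A' B' F'" for X' t' A' B' F'
    using psubset.IH that by blast
  consider "F = {}" | "2 \<le> t" "card X = 2 * t" | "2 \<le> t" "2 * t < card X"
    using two_le_t two_t_le_card_X by fastforce
  then show ?case
  proof cases
    case 1
    then show ?thesis by (rule bound_if_empty)
  next
    case 2
    then show ?thesis by (rule bound_if_half)
  next
    case 3
    have free: "card F' + ((card X - 1 - card A') choose (t - 1)) \<le> (card X - 1) choose (t - 1)"
      if inst: "pair_meeting_family X t A' B' F'" and "\<not> X \<subseteq> A' \<union> B'" for A' B' F'
      using that(2) 3 by (rule pair_meeting_family.bound_if_not_covering[OF inst]) (rule IH)
    show ?thesis
    proof (cases "X \<subseteq> A \<union> B")
      case True
      then have "X = A \<union> B" using A_subset B_subset by blast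
      then show ?thesis using 3 by (rule bound_if_covering) (rule free)
    next
      case False
      then show ?thesis by (rule free[OF psubset.prems])
    qed
  qed
qed

section \<open>Kneser graphs\<close>

lemma kneser_vertices_eq_k_subsets: "kneser_vertices n k = k_subsets {1..n} k"
  unfolding kneser_vertices_def k_subsets_def ..

lemma kneser_independent_iff:
  "kneser_independent n k Q \<longleftrightarrow> Q \<subseteq> k_subsets {1..n} k \<and> intersecting Q"
  unfolding kneser_independent_def kneser_adj_def intersecting_def kneser_vertices_eq_k_subsets
  by blast

lemma pair_meeting_family_if_kneser:
  assumes "2 * k + 1 \<le> n" "2 \<le> k"
    and Q: "kneser_independent n k Q" "x1 \<in> Q" "kneser_nbhd n k {x1, x2} \<inter> Q = {}"
    and x: "kneser_adj n k x1 x2"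
  shows "pair_meeting_family {1..n} k x1 x2 (Q - {x1})"
proof unfold_locales
  have "x2 \<notin> Q" using Q(1,2) x unfolding kneser_independent_def by blast
  fix S assume "S \<in> Q - {x1}"
  then have S: "S \<in> kneser_vertices n k" "S \<notin> {x1, x2}" "S \<notin> kneser_nbhd n k {x1, x2}"
    using Q \<open>x2 \<notin> Q\<close> unfolding kneser_independent_def by auto
  then have "\<not> kneser_adj n k x1 S" "\<not> kneser_adj n k x2 S"
    unfolding kneser_nbhd_def by auto
  then show "S \<inter> x1 \<noteq> {}" "S \<inter> x2 \<noteq> {}" using x S(1) unfolding kneser_adj_def by auto
next
  show "intersecting (Q - {x1})"
    using Q(1) intersecting_subset unfolding kneser_independent_iff by blast
qed (use assms x Q(1) in \<open>auto simp: kneser_adj_def kneser_vertices_def kneser_independent_iff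
    k_subsets_def\<close>)

theorem lemma2p10:
  fixes n k :: nat and Q :: "nat set set" and x1 x2 :: "nat set"
  assumes "n \<ge> 2 * k + 1" and "2 * k + 1 \<ge> 5"
    and "kneser_independent n k Q"
    and "kneser_adj n k x1 x2"
    and "x1 \<in> Q"
    and "kneser_nbhd n k {x1, x2} \<inter> Q = {}"
  shows "int (card Q) \<le> int ((n - 1) choose (k - 1)) - int ((n - k - 1) choose (k - 1)) + 1"
proof -
  have "card x1 = k" using assms(4) unfolding kneser_adj_def kneser_vertices_def by blast
  have "2 \<le> k" using assms(2) by simp
  from pair_meeting_family_bound[OF pair_meeting_family_if_kneser[OF assms(1) this assms(3,5,6,4)]]
  have "card (Q - {x1}) + ((n - k - 1) choose (k - 1)) \<le> (n - 1) choose (k - 1)"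
    using \<open>card x1 = k\<close> by (simp add: diff_diff_left add.commute)
  moreover have "finite Q"
    using assms(3) finite_k_subsets finite_subset unfolding kneser_independent_iff by blast
  then have "card Q = card (Q - {x1}) + 1" using card.remove[OF _ assms(5)] by simp
  ultimately show ?thesis by linarith
qed

end
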